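(* Let $q>0$ and let $U,V\in C^{4}(\mathbb{R}^{2})$ be radially symmetric, $U>0$, $V>0$, viewed as functions of $r=|x|\in[0,\infty)$, such that $$\Delta^{2}(U-V)(r)\ge V^{-q}(r)-U^{-q}(r)\quad\forall r\ge 0,\qquad U(0)=V(0),\qquad U^{(k)}(0)=V^{(k)}(0),\ k=1,2,3.$$ Then $U(r)\ge V(r)$ for all $r\ge 0$. If furthermore $\Delta^{2}(U-V)(0)>0$, then $U(r)>V(r)$ for all $r>0$.
   Context: For radial functions on $\mathbb{R}^{2}$, $\Delta f(r)=\frac1r(rf'(r))'$; derivatives at $r=0$ are one-sided derivatives of the profile. *)

theory Defs
  imports "HOL-Analysis.Analysis"
begin

definition partial :: "'a::euclidean_space \<Rightarrow> ('a \<Rightarrow> real) \<Rightarrow> 'a \<Rightarrow> real" where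
  "partial b f x = deriv (\<lambda>t. f (x + t *\<^sub>R b)) 0"

fun Ck :: "nat \<Rightarrow> ('a::euclidean_space \<Rightarrow> real) \<Rightarrow> bool" where
  "Ck 0 f = continuous_on UNIV f"
| "Ck (Suc k) f = ((\<forall>x. f differentiable (at x)) \<and> (\<forall>b\<in>Basis. Ck k (partial b f)))"

definition laplacian :: "('a::euclidean_space \<Rightarrow> real) \<Rightarrow> 'a \<Rightarrow> real" where
  "laplacian f x = (\<Sum>b\<in>Basis. partial b (partial b f) x)"

definition radial :: "('a::real_normed_vector \<Rightarrow> real) \<Rightarrow> bool" where
  "radial f \<longleftrightarrow> (\<forall>x y. norm x = norm y \<longrightarrow> f x = f y)"

definition profile :: "(real^2 \<Rightarrow> real) \<Rightarrow> real \<Rightarrow> real" where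
  "profile f r = f (r *\<^sub>R axis 1 1)"

end

theory Submission
  imports Defs
begin

(* Write w = U - V and u(r) = w(r e1). Radial symmetry turns the hypotheses into the system
   (r u')' = r v, (r v')' = r F with u(0) = v(0) = 0, where v and F are the profiles of the
   Laplacian and the bi-Laplacian of w, and F \<ge> V^-q - U^-q is bounded below by K min(0, u) on
   compact intervals since t^-q is Lipschitz away from 0. Integrating the system four times from the
   first point r1 where u turns negative bounds the negative part of u on [r1, r1 + e] by
   K e^4 / 24 times itself, so it vanishes and u \<ge> 0. If also F(0) > 0, then F \<ge> 0 everywhere
   and F > 0 near 0, which makes r v', v, r u' and u strictly positive for r > 0. *)

section \<open>Partial derivatives and smoothness classes\<close>

lemma has_real_derivative_partial:
  assumes "f differentiable (at (x + t0 *\<^sub>R b))"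
  shows "((\<lambda>t. f (x + t *\<^sub>R b)) has_real_derivative partial b f (x + t0 *\<^sub>R b)) (at t0)"
proof -
  obtain f' where f': "(f has_derivative f') (at (x + t0 *\<^sub>R b))"
    using assms by (auto simp: differentiable_def)
  have line: "((\<lambda>t. f (z + t *\<^sub>R b)) has_real_derivative f' b) (at s)"
    if "z + s *\<^sub>R b = x + t0 *\<^sub>R b" for z s
  proof -
    have "((\<lambda>t. z + t *\<^sub>R b) has_derivative (\<lambda>t. t *\<^sub>R b)) (at s)"
      by (auto intro!: derivative_eq_intros)
    from has_derivative_compose[OF this] f' that
    have "((\<lambda>t. f (z + t *\<^sub>R b)) has_derivative (\<lambda>t. f' (t *\<^sub>R b))) (at s)"
      by (simp add: o_def)
    moreover have "(\<lambda>t. f' (t *\<^sub>R b)) = (*) (f' b)"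
      using has_derivative_linear[OF f'] by (auto simp: linear_scale mult.commute)
    ultimately show ?thesis by (simp add: has_field_derivative_def)
  qed
  have "partial b f (x + t0 *\<^sub>R b) = f' b"
    unfolding partial_def by (rule DERIV_imp_deriv, rule line) simp
  then show ?thesis using line[of x t0] by simp
qed

lemma partial_diff:
  assumes "f differentiable (at x)" "g differentiable (at x)"
  shows "partial b (\<lambda>y. f y - g y) x = partial b f x - partial b g x"
  unfolding partial_def
  using has_real_derivative_partial[of f x 0 b] has_real_derivative_partial[of g x 0 b] assms
  by (intro DERIV_imp_deriv) (auto simp: partial_def intro!: derivative_eq_intros)

lemma partial_add:
  assumes "f differentiable (at x)" "g differentiable (at x)"
  shows "partial b (\<lambda>y. f y + g y) x = partial b f x + partial b g x"
  unfolding partial_def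
  using has_real_derivative_partial[of f x 0 b] has_real_derivative_partial[of g x 0 b] assms
  by (intro DERIV_imp_deriv) (auto simp: partial_def intro!: derivative_eq_intros)

lemma Ck_imp_continuous_on: "Ck k f \<Longrightarrow> continuous_on UNIV f"
  by (cases k) (auto intro!: differentiable_imp_continuous_on
      simp: differentiable_on_def differentiable_at_withinI)

lemma Ck_mono: "k \<le> m \<Longrightarrow> Ck m f \<Longrightarrow> Ck k f"
proof (induction k arbitrary: m f)
  case 0
  then show ?case using Ck_imp_continuous_on by simp
next
  case (Suc k)
  then obtain m' where "m = Suc m'" "k \<le> m'" by (cases m) auto
  with Suc show ?case by auto
qed

lemma Ck_zero: "Ck k (\<lambda>x. 0)"
proof (induction k)
  case (Suc k)
  have zero: "partial b (\<lambda>x. 0::real) = (\<lambda>x. 0)" for b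
    by (auto simp: partial_def intro!: DERIV_imp_deriv)
  show ?case using Suc.IH by (simp add: zero)
qed simp

lemma Ck_add: "Ck k f \<Longrightarrow> Ck k g \<Longrightarrow> Ck k (\<lambda>x. f x + g x)"
proof (induction k arbitrary: f g)
  case (Suc k)
  have "partial b (\<lambda>y. f y + g y) = (\<lambda>x. partial b f x + partial b g x)" for b
    using Suc.prems by (auto intro!: partial_add)
  with Suc show ?case by auto
qed (auto intro: continuous_on_add)

lemma Ck_diff: "Ck k f \<Longrightarrow> Ck k g \<Longrightarrow> Ck k (\<lambda>x. f x - g x)"
proof (induction k arbitrary: f g)
  case (Suc k)
  have "partial b (\<lambda>y. f y - g y) = (\<lambda>x. partial b f x - partial b g x)" for b
    using Suc.prems by (auto intro!: partial_diff)
  with Suc show ?case by auto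
qed (auto intro: continuous_on_diff)

lemma Ck_sum: "finite S \<Longrightarrow> (\<And>i. i \<in> S \<Longrightarrow> Ck k (f i)) \<Longrightarrow> Ck k (\<lambda>x. \<Sum>i\<in>S. f i x)"
proof (induction S rule: finite_induct)
  case (insert a S)
  then show ?case using Ck_add[of k "f a" "\<lambda>x. \<Sum>i\<in>S. f i x"] by simp
qed (simp add: Ck_zero)

lemma Ck_laplacian: "Ck (Suc (Suc k)) f \<Longrightarrow> Ck k (laplacian f)"
  unfolding laplacian_def[abs_def] by (intro Ck_sum) simp_all

lemma higher_partial_diff:
  "b \<in> Basis \<Longrightarrow> Ck k f \<Longrightarrow> Ck k g \<Longrightarrow>
    (partial b ^^ k) (\<lambda>y. f y - g y) = (\<lambda>y. (partial b ^^ k) f y - (partial b ^^ k) g y)"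
proof (induction k arbitrary: f g)
  case (Suc k)
  have "partial b (\<lambda>y. f y - g y) = (\<lambda>y. partial b f y - partial b g y)"
    using Suc.prems by (auto intro!: partial_diff)
  moreover have "Ck k (partial b f)" "Ck k (partial b g)"
    using Suc.prems by simp_all
  ultimately show ?case
    using Suc.IH Suc.prems(1) by (simp add: funpow_Suc_right del: funpow.simps)
qed simp

abbreviation e1 :: "real^2" where "e1 \<equiv> axis 1 1"

lemma has_real_derivative_profile:
  assumes "\<forall>x. f differentiable (at x)"
  shows "(profile f has_real_derivative profile (partial e1 f) r) (at r)"
  using has_real_derivative_partial[of f 0 r e1] assms unfolding profile_def by simp

lemma higher_deriv_profile: "Ck k f \<Longrightarrow> (deriv ^^ k) (profile f) = profile ((partial e1 ^^ k) f)"
proof (induction k arbitrary: f)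
  case (Suc k)
  have "deriv (profile f) = profile (partial e1 f)"
    using Suc.prems by (intro ext DERIV_imp_deriv has_real_derivative_profile) simp
  moreover have "Ck k (partial e1 f)" using Suc.prems by simp
  ultimately show ?case
    using Suc.IH by (simp add: funpow_Suc_right del: funpow.simps)
qed simp

lemma higher_deriv_profile_diff:
  assumes "Ck k f" "Ck k g"
  shows "(deriv ^^ k) (profile (\<lambda>y. f y - g y)) r = (deriv ^^ k) (profile f) r - (deriv ^^ k) (profile g) r"
  using higher_deriv_profile[OF Ck_diff[OF assms]] higher_partial_diff[OF _ assms, of e1]
    higher_deriv_profile[OF assms(1)] higher_deriv_profile[OF assms(2)] by (simp add: profile_def)

lemma continuous_on_profile: "continuous_on UNIV f \<Longrightarrow> continuous_on UNIV (profile f)"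
  unfolding profile_def by (rule continuous_on_compose2) (auto intro!: continuous_intros)

lemma radial_eq_profile_norm:
  assumes "radial f"
  shows "f x = profile f (norm x)"
proof -
  have "norm (norm x *\<^sub>R e1) = norm x" by simp
  then show ?thesis using assms unfolding radial_def profile_def by metis
qed

lemma radial_along_unit:
  assumes "radial f" "norm b = 1"
  shows "f (t *\<^sub>R b) = profile f t"
proof -
  have "norm (t *\<^sub>R b) = norm (t *\<^sub>R e1)" using assms(2) by simp
  then show ?thesis using assms(1) unfolding radial_def profile_def by blast
qed

section \<open>The Laplacian of a radial function\<close>

lemma has_real_derivative_norm_line:
  fixes y b :: "'a::euclidean_space"
  assumes "y \<noteq> 0"
  shows "((\<lambda>t. norm (y + t *\<^sub>R b)) has_real_derivative (y \<bullet> b) / norm y) (at 0)"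
proof -
  have "((\<lambda>t. y + t *\<^sub>R b) has_derivative (\<lambda>t. t *\<^sub>R b)) (at 0)"
    by (auto intro!: derivative_eq_intros)
  moreover have "(norm has_derivative (\<lambda>h. h \<bullet> sgn y)) (at (y + 0 *\<^sub>R b))"
    using has_derivative_norm[OF assms] by simp
  ultimately have "((\<lambda>t. norm (y + t *\<^sub>R b)) has_derivative (\<lambda>t. (t *\<^sub>R b) \<bullet> sgn y)) (at 0)"
    using has_derivative_compose by (fastforce simp: o_def)
  moreover have "(\<lambda>t. (t *\<^sub>R b) \<bullet> sgn y) = (*) ((y \<bullet> b) / norm y)"
    by (rule ext) (simp add: sgn_div_norm inner_commute field_simps)
  ultimately show ?thesis by (simp add: has_field_derivative_def)
qed

lemma partial_radial:
  fixes f :: "'a::euclidean_space \<Rightarrow> real"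
  assumes "\<forall>y. f y = g (norm y)" "y \<noteq> 0" "(g has_real_derivative g') (at (norm y))"
  shows "partial b f y = g' * ((y \<bullet> b) / norm y)"
proof -
  have "((\<lambda>t. g (norm (y + t *\<^sub>R b))) has_real_derivative g' * ((y \<bullet> b) / norm y)) (at 0)"
    using DERIV_chain2[OF _ has_real_derivative_norm_line[OF assms(2)], of g g'] assms(3) by simp
  then show ?thesis unfolding partial_def using assms(1) by (simp add: DERIV_imp_deriv)
qed

lemma laplacian_radial:
  fixes f :: "'a::euclidean_space \<Rightarrow> real"
  assumes f: "\<forall>y. f y = g (norm y)" and g: "\<And>\<rho>. \<rho> > 0 \<Longrightarrow> (g has_real_derivative g' \<rho>) (at \<rho>)"
    and g': "(g' has_real_derivative g'') (at (norm x))" and x: "x \<noteq> 0"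
  shows "laplacian f x = g'' + (real DIM('a) - 1) * g' (norm x) / norm x"
proof -
  define N where "N = norm x"
  have N: "N > 0" using x N_def by simp
  have second: "partial b (partial b f) x = g'' * (x \<bullet> b)^2 / N^2 + g' N / N - g' N * (x \<bullet> b)^2 / N^3"
    if b: "b \<in> Basis" for b
  proof -
    define n where "n = (\<lambda>t::real. norm (x + t *\<^sub>R b))"
    have n0: "n 0 = N" unfolding n_def N_def by simp
    have first: "partial b f (x + t *\<^sub>R b) = g' (n t) * ((x \<bullet> b) + t) / n t"
      if "x + t *\<^sub>R b \<noteq> 0" for t
      using partial_radial[OF f that g, of b] that b unfolding n_def by (simp add: inner_add_left)
    have n': "(n has_real_derivative (x \<bullet> b) / N) (at 0)"
      unfolding n_def N_def by (rule has_real_derivative_norm_line[OF x])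
    have "((\<lambda>t. g' (n t)) has_real_derivative g'' * ((x \<bullet> b) / N)) (at 0)"
      using DERIV_chain2[OF _ n'] g' n0 N_def by simp
    from DERIV_divide[OF DERIV_mult[OF this DERIV_add[OF DERIV_const DERIV_ident]] n']
    have "((\<lambda>t. g' (n t) * ((x \<bullet> b) + t) / n t) has_real_derivative
        ((g'' * ((x \<bullet> b) / N) * (x \<bullet> b) + g' N) * N - g' N * (x \<bullet> b) * ((x \<bullet> b) / N)) / (N * N)) (at 0)"
      using N n0 by simp
    then have "((\<lambda>t. partial b f (x + t *\<^sub>R b)) has_real_derivative
        ((g'' * ((x \<bullet> b) / N) * (x \<bullet> b) + g' N) * N - g' N * (x \<bullet> b) * ((x \<bullet> b) / N)) / (N * N)) (at 0)"
      by (rule has_field_derivative_transform_within_open[where S = "{t. x + t *\<^sub>R b \<noteq> 0}"])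
        (auto simp: x first intro!: open_Collect_neq continuous_intros)
    moreover have "((g'' * ((x \<bullet> b) / N) * (x \<bullet> b) + g' N) * N - g' N * (x \<bullet> b) * ((x \<bullet> b) / N)) / (N * N)
        = g'' * (x \<bullet> b)^2 / N^2 + g' N / N - g' N * (x \<bullet> b)^2 / N^3"
      using N by (simp add: field_simps power2_eq_square power3_eq_cube)
    ultimately show ?thesis unfolding partial_def[of b "partial b f"] by (simp add: DERIV_imp_deriv)
  qed
  have "(\<Sum>b\<in>Basis. (x \<bullet> b)^2) = N^2"
    unfolding N_def power2_norm_eq_inner by (subst euclidean_inner) (simp add: power2_eq_square)
  then have "laplacian f x = g'' * N^2 / N^2 + real DIM('a) * (g' N / N) - g' N * N^2 / N^3"
    unfolding laplacian_def using second
    by (simp add: sum.distrib sum_subtractf sum_divide_distrib[symmetric] sum_distrib_left[symmetric])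
  also have "\<dots> = g'' + (real DIM('a) - 1) * g' N / N"
    using N by (simp add: field_simps power2_eq_square power3_eq_cube)
  finally show ?thesis unfolding N_def .
qed

lemma laplacian_radial_origin:
  assumes "Ck 2 f" "radial f"
  shows "laplacian f 0 = 2 * (deriv ^^ 2) (profile f) 0"
proof -
  have f: "\<forall>x. f differentiable (at x)" "\<forall>x. partial e1 f differentiable (at x)"
    using assms(1) by (simp_all add: numeral_2_eq_2)
  have "partial b (partial b f) 0 = profile (partial e1 (partial e1 f)) 0" if b: "b \<in> Basis" for b
  proof -
    have "(\<lambda>t. f (0 + t *\<^sub>R b)) = profile f"
      using radial_along_unit[OF assms(2)] b by auto
    then have "(profile f has_real_derivative partial b f (0 + s *\<^sub>R b)) (at s)" for s
      using has_real_derivative_partial[of f 0 s b] f(1) by simp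
    then have "(\<lambda>t. partial b f (0 + t *\<^sub>R b)) = profile (partial e1 f)"
      using has_real_derivative_profile[OF f(1)] DERIV_unique by blast
    then show ?thesis unfolding partial_def[of b "partial b f"]
      using has_real_derivative_profile[OF f(2)] by (simp add: DERIV_imp_deriv)
  qed
  then show ?thesis
    using higher_deriv_profile[OF assms(1)] by (simp add: laplacian_def numeral_2_eq_2)
qed

lemma laplacian_radial_profile:
  assumes f: "Ck 2 f" "radial f" and x: "x \<noteq> 0"
  shows "laplacian f x = profile (partial e1 (partial e1 f)) (norm x) + profile (partial e1 f) (norm x) / norm x"
proof -
  have "\<forall>x. f differentiable (at x)" "\<forall>x. partial e1 f differentiable (at x)"
    using f(1) by (simp_all add: numeral_2_eq_2)
  then show ?thesis
    using laplacian_radial[OF _ has_real_derivative_profile has_real_derivative_profile x]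
      radial_eq_profile_norm[OF f(2)] by simp
qed

lemma radial_laplacian:
  fixes f :: "real^2 \<Rightarrow> real"
  assumes "Ck 2 f" "radial f"
  shows "radial (laplacian f)"
  unfolding radial_def
proof (intro allI impI)
  fix x y :: "real^2" assume "norm x = norm y"
  then show "laplacian f x = laplacian f y"
    using laplacian_radial_profile[OF assms, of x] laplacian_radial_profile[OF assms, of y]
    by (metis norm_eq_zero)
qed

section \<open>The radial bi-Laplacian system in the plane\<close>

(* u' is the derivative of u, and (r u')' / r = v is the Laplacian of u(|x|) in the plane;
   stated through the flux r u' so that nothing is divided by r and r u' vanishes at r = 0. *)
definition has_radial_laplacian :: "(real \<Rightarrow> real) \<Rightarrow> (real \<Rightarrow> real) \<Rightarrow> (real \<Rightarrow> real) \<Rightarrow> bool" where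
  "has_radial_laplacian u u' v \<longleftrightarrow> continuous_on UNIV u \<and> continuous_on UNIV u' \<and>
     (\<forall>r>0. (u has_real_derivative u' r) (at r) \<and> ((\<lambda>s. s * u' s) has_real_derivative r * v r) (at r))"

lemma radial_profile_has_radial_laplacian:
  assumes f: "Ck 2 f" "radial f"
  shows "has_radial_laplacian (profile f) (profile (partial e1 f)) (profile (laplacian f))"
proof -
  have d: "\<forall>x. f differentiable (at x)" "\<forall>x. partial e1 f differentiable (at x)"
    using f(1) by (simp_all add: numeral_2_eq_2)
  note u' = has_real_derivative_profile[OF d(1)] and u'' = has_real_derivative_profile[OF d(2)]
  have "((\<lambda>s. s * profile (partial e1 f) s) has_real_derivative r * profile (laplacian f) r) (at r)"
    if r: "0 < r" for r
  proof -
    have "profile (laplacian f) r = profile (partial e1 (partial e1 f)) r + profile (partial e1 f) r / r"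
      using laplacian_radial_profile[OF f, of "r *\<^sub>R e1"] r by (simp add: profile_def)
    then show ?thesis using DERIV_mult[OF DERIV_ident u''] r by (simp add: field_simps)
  qed
  moreover have "continuous_on UNIV (profile f)" "continuous_on UNIV (profile (partial e1 f))"
    using u' u'' by (auto intro!: continuous_at_imp_continuous_on DERIV_isCont)
  ultimately show ?thesis unfolding has_radial_laplacian_def using u' by blast
qed

lemma has_real_derivative_shifted_power_div:
  "((\<lambda>s. (s - a) ^ Suc n / real (Suc n)) has_real_derivative (x - a) ^ n) (at x)"
proof -
  have "((\<lambda>s. (s - a) ^ Suc n) has_real_derivative real (Suc n) * (x - a) ^ n) (at x)"
    using DERIV_power_Suc[OF DERIV_diff[OF DERIV_ident DERIV_const[of a]], where n = n] by simp
  from DERIV_cdivide[OF this, of "real (Suc n)"] show ?thesis by simp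
qed

lemma has_radial_laplacian_lower_bound:
  assumes L: "has_radial_laplacian u u' v" and ab: "0 \<le> a" "a \<le> b" and C: "0 \<le> C"
    and v: "\<And>x. a < x \<Longrightarrow> x < b \<Longrightarrow> - C * (x - a) ^ n \<le> v x"
    and init: "0 \<le> a * u' a" "0 \<le> u a"
  shows "\<forall>r\<in>{a..b}. - C * r * ((r - a) ^ Suc n / real (Suc n)) \<le> r * u' r \<and>
    - C * ((r - a) ^ Suc (Suc n) / real (Suc n * Suc (Suc n))) \<le> u r"
proof
  fix r assume r: "r \<in> {a..b}"
  have cont: "continuous_on A u" "continuous_on A u'" for A
    using L continuous_on_subset unfolding has_radial_laplacian_def by blast+
  have deriv: "(u has_real_derivative u' x) (at x)" "((\<lambda>s. s * u' s) has_real_derivative x * v x) (at x)"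
    if "a < x" "x < r" for x
    using L that ab unfolding has_radial_laplacian_def by auto
  define P where "P m s = (s - a) ^ Suc m / real (Suc m)" for m s
  have P: "(P m has_real_derivative (x - a) ^ m) (at x)" for m x
    unfolding P_def by (rule has_real_derivative_shifted_power_div)
  have P_nonneg: "0 \<le> P m x" if "a \<le> x" for m x
    using that unfolding P_def by simp
  have flux: "- C * x * P n x \<le> x * u' x" if x: "a \<le> x" "x \<le> r" for x
  proof -
    have "(\<lambda>s. s * u' s + C * s * P n s) a \<le> (\<lambda>s. s * u' s + C * s * P n s) x"
    proof (rule DERIV_nonneg_imp_increasing_open[OF x(1)])
      fix y assume y: "a < y" "y < x"
      have "((\<lambda>s. C * s * P n s) has_real_derivative C * P n y + C * y * (y - a) ^ n) (at y)"
        using DERIV_mult[OF DERIV_cmult[OF DERIV_ident, of C] P[of n y]] by (simp add: mult_ac)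
      with deriv(2) y x have D: "((\<lambda>s. s * u' s + C * s * P n s) has_real_derivative
          y * v y + (C * P n y + C * y * (y - a) ^ n)) (at y)"
        by (intro DERIV_add) auto
      have "y * (- C * (y - a) ^ n) \<le> y * v y"
        using v[of y] y x r ab by (intro mult_left_mono) auto
      then have "- (C * y * (y - a) ^ n) \<le> y * v y" by (simp add: algebra_simps)
      moreover have "0 \<le> C * P n y" using C P_nonneg[of y n] y by simp
      ultimately have "0 \<le> y * v y + (C * P n y + C * y * (y - a) ^ n)" by linarith
      then show "\<exists>D. ((\<lambda>s. s * u' s + C * s * P n s) has_real_derivative D) (at y) \<and> 0 \<le> D"
        using D by blast
    qed (use x cont in \<open>auto intro!: continuous_intros simp: P_def\<close>)
    moreover have "P n a = 0" unfolding P_def by simp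
    ultimately show ?thesis using init(1) by simp
  qed
  have "(\<lambda>s. u s + C / real (Suc n) * P (Suc n) s) a \<le> (\<lambda>s. u s + C / real (Suc n) * P (Suc n) s) r"
  proof (rule DERIV_nonneg_imp_increasing_open[where f = "\<lambda>s. u s + C / real (Suc n) * P (Suc n) s"])
    fix y assume y: "a < y" "y < r"
    have "y * (- C * P n y) \<le> y * u' y" using flux[of y] y by (simp add: algebra_simps)
    then have "- C * P n y \<le> u' y" by (rule mult_left_le_imp_le) (use y ab in auto)
    moreover have "C / real (Suc n) * (y - a) ^ Suc n = C * P n y" by (simp add: P_def)
    ultimately have "0 \<le> u' y + C / real (Suc n) * (y - a) ^ Suc n" by linarith
    moreover have "((\<lambda>s. u s + C / real (Suc n) * P (Suc n) s) has_real_derivative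
        u' y + C / real (Suc n) * (y - a) ^ Suc n) (at y)"
      by (intro DERIV_add DERIV_cmult P deriv(1)) (use y in auto)
    ultimately show "\<exists>D. ((\<lambda>s. u s + C / real (Suc n) * P (Suc n) s) has_real_derivative D) (at y) \<and> 0 \<le> D"
      by blast
  qed (use r cont in \<open>auto intro!: continuous_intros simp: P_def\<close>)
  moreover have "P (Suc n) a = 0" unfolding P_def by simp
  moreover have "C / real (Suc n) * P (Suc n) r = C * ((r - a) ^ Suc (Suc n) / real (Suc n * Suc (Suc n)))"
    unfolding P_def of_nat_mult by (simp del: of_nat_Suc)
  ultimately have "- C * ((r - a) ^ Suc (Suc n) / real (Suc n * Suc (Suc n))) \<le> u r"
    using init(2) by simp
  moreover have "- C * r * ((r - a) ^ Suc n / real (Suc n)) \<le> r * u' r"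
    using flux[of r] r by (simp add: P_def)
  ultimately show "- C * r * ((r - a) ^ Suc n / real (Suc n)) \<le> r * u' r \<and>
      - C * ((r - a) ^ Suc (Suc n) / real (Suc n * Suc (Suc n))) \<le> u r"
    by blast
qed

lemma has_radial_bilaplacian_lower_bound:
  assumes Lu: "has_radial_laplacian u u' v" and Lv: "has_radial_laplacian v v' F"
    and ab: "0 \<le> a" "a \<le> b" and C: "0 \<le> C" and F: "\<And>x. a < x \<Longrightarrow> x < b \<Longrightarrow> - C \<le> F x"
    and init: "0 \<le> a * v' a" "0 \<le> v a" "0 \<le> a * u' a" "0 \<le> u a"
  shows "\<forall>r\<in>{a..b}. - C * r * (r - a) \<le> r * v' r \<and> - C * (r - a)^2 / 2 \<le> v r \<and>
    - C * r * (r - a)^3 / 6 \<le> r * u' r \<and> - C * (r - a)^4 / 24 \<le> u r"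
proof -
  have v: "\<forall>r\<in>{a..b}. - C * r * ((r - a) ^ 1 / 1) \<le> r * v' r \<and>
      - C * ((r - a) ^ 2 / real (1 * 2)) \<le> v r"
    using has_radial_laplacian_lower_bound[OF Lv ab C, of 0] F init(1,2) by (simp add: numeral_2_eq_2)
  have u: "\<forall>r\<in>{a..b}. - (C / 2) * r * ((r - a) ^ 3 / real 3) \<le> r * u' r \<and>
      - (C / 2) * ((r - a) ^ 4 / real (3 * 4)) \<le> u r"
    using has_radial_laplacian_lower_bound[OF Lu ab, of "C / 2" 2] C v init(3,4)
    by (simp add: numeral_3_eq_3 numeral_2_eq_2 eval_nat_numeral)
  show ?thesis using u v by (auto simp: field_simps)
qed

lemma has_radial_bilaplacian_nonneg_near:
  assumes Lu: "has_radial_laplacian u u' v" and Lv: "has_radial_laplacian v v' F"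
    and a: "0 \<le> a" and init: "0 \<le> a * v' a" "0 \<le> v a" "0 \<le> a * u' a" "0 \<le> u a"
    and K: "0 \<le> K" "\<And>x. x \<in> {a..a + 1} \<Longrightarrow> K * min 0 (u x) \<le> F x"
  obtains e where "0 < e" "\<And>r. r \<in> {a..a + e} \<Longrightarrow> 0 \<le> u r"
proof
  define e where "e = 1 / (K + 1)"
  have e: "0 < e" "e \<le> 1" "K * e < 1" using K(1) unfolding e_def by (auto simp: field_simps)
  then show "0 < e" by simp
  have "continuous_on {a..a + e} u"
    using Lu continuous_on_subset unfolding has_radial_laplacian_def by blast
  moreover have "{a..a + e} \<noteq> {}" using e by simp
  ultimately obtain s where s: "s \<in> {a..a + e}" "\<And>y. y \<in> {a..a + e} \<Longrightarrow> u s \<le> u y"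
    using continuous_attains_inf[OF compact_Icc] by blast
  show "0 \<le> u r" if r: "r \<in> {a..a + e}" for r
  proof (rule ccontr)
    assume "\<not> 0 \<le> u r"
    \<comment> \<open>F \<ge> -K m on [a, s], and four integrations give m \<le> K m e^4 / 24 < m.\<close>
    define m where "m = - u s"
    have m: "0 < m" using s(2)[OF r] \<open>\<not> 0 \<le> u r\<close> unfolding m_def by simp
    have F: "- (K * m) \<le> F x" if x: "a < x" "x < s" for x
    proof -
      have "K * min 0 (u x) \<le> F x" using K(2)[of x] s(1) e x by auto
      moreover have "- m \<le> min 0 (u x)" using s x m unfolding m_def by auto
      ultimately show ?thesis using K(1) mult_left_mono[of "- m" "min 0 (u x)" K] by linarith
    qed
    have "- (K * m) * (s - a)^4 / 24 \<le> u s"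
      using has_radial_bilaplacian_lower_bound[OF Lu Lv a _ _ F init] s(1) K(1) m by auto
    then have "m \<le> K * m * (s - a)^4 / 24" unfolding m_def by simp
    moreover have "(s - a)^4 \<le> e^4" using s(1) by (intro power_mono) auto
    then have "(s - a)^4 \<le> e" using power_decreasing[of 1 4 e] e by simp
    then have "K * m * (s - a)^4 \<le> K * m * e" using K(1) m by (intro mult_left_mono) auto
    moreover have "K * e * m < 1 * m" using e(3) m by (rule mult_strict_right_mono)
    then have "K * m * e < m" by (simp add: mult_ac)
    ultimately show False using m by linarith
  qed
qed

lemma has_radial_bilaplacian_nonneg:
  assumes Lu: "has_radial_laplacian u u' v" and Lv: "has_radial_laplacian v v' F"
    and init: "u 0 = 0" "v 0 = 0"
    and F: "\<And>B. 0 \<le> B \<Longrightarrow> \<exists>K\<ge>0. \<forall>x\<in>{0..B}. K * min 0 (u x) \<le> F x"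
  shows "0 \<le> r \<Longrightarrow> 0 \<le> u r"
proof (rule ccontr)
  assume "0 \<le> r" "\<not> 0 \<le> u r"
  define S where "S = {s. 0 \<le> s \<and> u s < 0}"
  define r1 where "r1 = Inf S"
  have S: "S \<noteq> {}" "bdd_below S"
    using \<open>0 \<le> r\<close> \<open>\<not> 0 \<le> u r\<close> unfolding S_def by (auto intro: bdd_belowI[of _ 0])
  then have r1: "0 \<le> r1" unfolding r1_def by (auto intro: cInf_greatest simp: S_def)
  have before: "0 \<le> u x" if "0 \<le> x" "x < r1" for x
    using cInf_lower[OF _ S(2), of x] that unfolding r1_def S_def by force
  obtain K where K: "0 \<le> K" "\<forall>x\<in>{0..r1 + 1}. K * min 0 (u x) \<le> F x" using F[of "r1 + 1"] r1 by auto
  have "\<forall>x\<in>{0..r1}. - 0 * x * (x - 0) \<le> x * v' x \<and> - 0 * (x - 0)^2 / 2 \<le> v x \<and>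
      - 0 * x * (x - 0)^3 / 6 \<le> x * u' x \<and> - 0 * (x - 0)^4 / 24 \<le> u x"
  proof (rule has_radial_bilaplacian_lower_bound[OF Lu Lv])
    fix x assume x: "0 < x" "x < r1"
    then have "K * min 0 (u x) \<le> F x" using K(2) by auto
    then show "- 0 \<le> F x" using before[of x] x by simp
  qed (use r1 init in auto)
  then have "0 \<le> r1 * v' r1" "0 \<le> v r1" "0 \<le> r1 * u' r1" "0 \<le> u r1" using r1 by auto
  moreover have "K * min 0 (u x) \<le> F x" if "x \<in> {r1..r1 + 1}" for x
    using K(2) r1 that by auto
  ultimately obtain e where e: "0 < e" "\<And>x. x \<in> {r1..r1 + e} \<Longrightarrow> 0 \<le> u x"
    using has_radial_bilaplacian_nonneg_near[OF Lu Lv r1 _ _ _ _ K(1)] by blast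
  obtain s where "s \<in> S" "s < r1 + e" using cInf_lessD[OF S(1), of "r1 + e"] e unfolding r1_def by auto
  moreover have "r1 \<le> s" using cInf_lower[OF \<open>s \<in> S\<close> S(2)] unfolding r1_def .
  ultimately show False using e(2)[of s] unfolding S_def by auto
qed

lemma has_radial_laplacian_pos:
  assumes L: "has_radial_laplacian u u' v" and u0: "0 \<le> u 0"
    and v: "\<And>x. 0 < x \<Longrightarrow> 0 \<le> v x" and \<delta>: "0 < \<delta>" "\<And>x. 0 < x \<Longrightarrow> x < \<delta> \<Longrightarrow> 0 < v x"
    and r: "0 < r"
  shows "0 < u r"
proof -
  have deriv: "(u has_real_derivative u' x) (at x)" "((\<lambda>s. s * u' s) has_real_derivative x * v x) (at x)"
    if "0 < x" for x
    using L that unfolding has_radial_laplacian_def by auto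
  have cont: "continuous_on A u" "continuous_on A (\<lambda>s. s * u' s)" for A
    using L unfolding has_radial_laplacian_def
    by (auto intro!: continuous_intros intro: continuous_on_subset)
  have flux: "0 < x * u' x" if x: "0 < x" for x
  proof -
    define t where "t = min x \<delta> / 2"
    have t: "0 < t" "t < x" "t < \<delta>" using x \<delta> unfolding t_def by auto
    have "0 * u' 0 < t * u' t"
    proof (rule DERIV_pos_imp_increasing_open[OF t(1)])
      fix y assume "0 < y" "y < t"
      then show "\<exists>D. ((\<lambda>s. s * u' s) has_real_derivative D) (at y) \<and> 0 < D"
        using deriv(2)[of y] \<delta>(2)[of y] t by (intro exI[of _ "y * v y"]) auto
    qed (use cont in auto)
    also have "t * u' t \<le> x * u' x"
    proof (rule DERIV_nonneg_imp_increasing_open[OF less_imp_le[OF t(2)]])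
      fix y assume "t < y" "y < x"
      then show "\<exists>D. ((\<lambda>s. s * u' s) has_real_derivative D) (at y) \<and> 0 \<le> D"
        using deriv(2)[of y] v[of y] t by (intro exI[of _ "y * v y"]) auto
    qed (use cont in auto)
    finally show ?thesis by simp
  qed
  have "u 0 < u r"
  proof (rule DERIV_pos_imp_increasing_open[OF r])
    fix y assume "0 < y" "y < r"
    then show "\<exists>D. (u has_real_derivative D) (at y) \<and> 0 < D"
      using deriv(1)[of y] flux[of y] by (intro exI[of _ "u' y"]) (auto simp: zero_less_mult_iff)
  qed (use cont in auto)
  then show ?thesis using u0 by simp
qed

lemma has_radial_bilaplacian_pos:
  assumes Lu: "has_radial_laplacian u u' v" and Lv: "has_radial_laplacian v v' F"
    and init: "0 \<le> u 0" "0 \<le> v 0"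
    and F: "isCont F 0" "0 < F 0" "\<And>x. 0 < x \<Longrightarrow> 0 \<le> F x" and r: "0 < r"
  shows "0 < u r"
proof -
  have "\<forall>\<^sub>F x in at 0. 0 < F x"
    using F(1,2) unfolding isCont_def by (rule order_tendstoD)
  then obtain \<delta> where \<delta>: "0 < \<delta>" "\<And>x. 0 < x \<Longrightarrow> x < \<delta> \<Longrightarrow> 0 < F x"
    unfolding eventually_at by (auto simp: dist_real_def)
  have "0 < v x" if "0 < x" for x
    using has_radial_laplacian_pos[OF Lv init(2) F(3) \<delta>] that by simp
  then show ?thesis
    using has_radial_laplacian_pos[OF Lu init(1) _ zero_less_one _ r] less_imp_le by blast
qed

lemma radial_profile_has_radial_bilaplacian:
  fixes w :: "real^2 \<Rightarrow> real"
  assumes w: "Ck 4 w" "radial w"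
  shows "has_radial_laplacian (profile w) (profile (partial e1 w)) (profile (laplacian w))"
    and "has_radial_laplacian (profile (laplacian w)) (profile (partial e1 (laplacian w)))
      (profile (laplacian (laplacian w)))"
proof -
  have w2: "Ck 2 w" by (rule Ck_mono[OF _ w(1)]) simp
  have "Ck 2 (laplacian w)" using Ck_laplacian[of 2 w] w(1) by (simp add: eval_nat_numeral)
  then show "has_radial_laplacian (profile (laplacian w)) (profile (partial e1 (laplacian w)))
      (profile (laplacian (laplacian w)))"
    by (rule radial_profile_has_radial_laplacian[OF _ radial_laplacian[OF w2 w(2)]])
  show "has_radial_laplacian (profile w) (profile (partial e1 w)) (profile (laplacian w))"
    by (rule radial_profile_has_radial_laplacian[OF w2 w(2)])
qed

lemma radial_bilaplacian_nonneg:
  fixes w :: "real^2 \<Rightarrow> real"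
  assumes w: "Ck 4 w" "radial w" and init: "w 0 = 0" "(deriv ^^ 2) (profile w) 0 = 0"
    and F: "\<And>B. \<exists>K\<ge>0. \<forall>x\<in>cball 0 B. K * min 0 (w x) \<le> laplacian (laplacian w) x"
  shows "0 \<le> w x"
proof -
  have v0: "profile (laplacian w) 0 = 0"
    using laplacian_radial_origin[OF Ck_mono[OF _ w(1)] w(2)] init by (simp add: profile_def)
  have "0 \<le> profile w r" if "0 \<le> r" for r
  proof (rule has_radial_bilaplacian_nonneg[OF radial_profile_has_radial_bilaplacian[OF w] _ v0 _ that])
    show "profile w 0 = 0" using init by (simp add: profile_def)
    fix B :: real
    obtain K where K: "0 \<le> K" "\<And>x. x \<in> cball 0 B \<Longrightarrow> K * min 0 (w x) \<le> laplacian (laplacian w) x"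
      using F by blast
    have "K * min 0 (profile w r) \<le> profile (laplacian (laplacian w)) r" if "r \<in> {0..B}" for r
      using K(2)[of "r *\<^sub>R e1"] that by (simp add: profile_def)
    then show "\<exists>K\<ge>0. \<forall>r\<in>{0..B}. K * min 0 (profile w r) \<le> profile (laplacian (laplacian w)) r"
      using K(1) by blast
  qed
  then show ?thesis using radial_eq_profile_norm[OF w(2), of x] by simp
qed

lemma radial_bilaplacian_pos:
  fixes w :: "real^2 \<Rightarrow> real"
  assumes w: "Ck 4 w" "radial w" and init: "w 0 = 0" "(deriv ^^ 2) (profile w) 0 = 0"
    and F: "\<And>x. 0 \<le> laplacian (laplacian w) x" "0 < laplacian (laplacian w) 0" and x: "x \<noteq> 0"
  shows "0 < w x"
proof -
  have v0: "profile (laplacian w) 0 = 0"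
    using laplacian_radial_origin[OF Ck_mono[OF _ w(1)] w(2)] init by (simp add: profile_def)
  have "Ck 0 (laplacian (laplacian w))"
    using Ck_laplacian[OF Ck_laplacian, of 0 w] w(1) by (simp add: eval_nat_numeral del: Ck.simps)
  then have "continuous_on UNIV (profile (laplacian (laplacian w)))"
    by (intro continuous_on_profile Ck_imp_continuous_on)
  then have cont: "isCont (profile (laplacian (laplacian w))) 0"
    by (simp add: continuous_on_eq_continuous_at)
  have "0 < profile w (norm x)"
    by (rule has_radial_bilaplacian_pos[OF radial_profile_has_radial_bilaplacian[OF w] _ _ cont])
      (use init v0 F x in \<open>simp_all add: profile_def\<close>)
  then show ?thesis using radial_eq_profile_norm[OF w(2), of x] by simp
qed

section \<open>The comparison principle\<close>

lemma powr_neg_diff_le: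
  fixes a b c q :: real
  assumes "0 < c" "c \<le> a" "a \<le> b" "0 < q"
  shows "a powr (-q) - b powr (-q) \<le> q * c powr (-q - 1) * (b - a)"
proof (cases "a = b")
  case False
  then have ab: "a < b" using assms by simp
  have "((\<lambda>t. t powr (-q)) has_real_derivative - q * x powr (-q - 1)) (at x)" if "a \<le> x" for x
    using has_real_derivative_powr[of x "-q"] that assms by simp
  then obtain z where z: "a < z" "z < b" "b powr (-q) - a powr (-q) = (b - a) * (- q * z powr (-q - 1))"
    using MVT2[OF ab] by fastforce
  have "z powr (-q - 1) \<le> c powr (-q - 1)" using z assms by (intro powr_mono2') auto
  then have "(b - a) * q * z powr (-q - 1) \<le> (b - a) * q * c powr (-q - 1)"
    using ab assms by (intro mult_left_mono) auto
  then show ?thesis using z(3) by (simp add: algebra_simps)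
qed simp

lemma powr_neg_diff_lower_bound:
  fixes f g :: "'a::topological_space \<Rightarrow> real"
  assumes S: "compact S" "continuous_on S f" and pos: "\<And>x. x \<in> S \<Longrightarrow> 0 < f x" "\<And>x. x \<in> S \<Longrightarrow> 0 < g x"
    and q: "0 < q"
  obtains K where "0 \<le> K" "\<And>x. x \<in> S \<Longrightarrow> K * min 0 (f x - g x) \<le> g x powr (-q) - f x powr (-q)"
proof (cases "S = {}")
  case False
  then obtain x0 where x0: "x0 \<in> S" "\<And>x. x \<in> S \<Longrightarrow> f x0 \<le> f x"
    using continuous_attains_inf[OF S(1) False S(2)] by blast
  show ?thesis
  proof
    show "0 \<le> q * f x0 powr (-q - 1)" using q by simp
    fix x assume x: "x \<in> S"
    show "q * f x0 powr (-q - 1) * min 0 (f x - g x) \<le> g x powr (-q) - f x powr (-q)"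
    proof (cases "f x \<le> g x")
      case True
      then show ?thesis
        using powr_neg_diff_le[of "f x0" "f x" "g x" q] pos x0 x q by (simp add: algebra_simps)
    next
      case False
      then show ?thesis using powr_mono2'[of "-q" "g x" "f x"] pos x q by simp
    qed
  qed
qed (use order_refl in auto)

theorem mainTheorem14:
  fixes U V :: "real^2 \<Rightarrow> real" and q :: real
  assumes q: "q > 0"
    and CU: "Ck 4 U" and CV: "Ck 4 V"
    and radU: "radial U" and radV: "radial V"
    and Upos: "\<forall>x. U x > 0" and Vpos: "\<forall>x. V x > 0"
    and ineq: "\<forall>x. laplacian (laplacian (\<lambda>y. U y - V y)) x \<ge> V x powr (-q) - U x powr (-q)"
    and init0: "U 0 = V 0"
    and initk: "\<forall>k\<in>{1,2,3::nat}. (deriv ^^ k) (profile U) 0 = (deriv ^^ k) (profile V) 0"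
  shows "(\<forall>x. U x \<ge> V x) \<and>
         (laplacian (laplacian (\<lambda>y. U y - V y)) 0 > 0 \<longrightarrow> (\<forall>x. x \<noteq> 0 \<longrightarrow> U x > V x))"
proof -
  define w where "w = (\<lambda>y. U y - V y)"
  have w: "Ck 4 w" "radial w"
    using Ck_diff[OF CU CV] radU radV unfolding w_def radial_def by metis+
  have init: "w 0 = 0" "(deriv ^^ 2) (profile w) 0 = 0"
    using init0 initk higher_deriv_profile_diff[OF Ck_mono[OF _ CU] Ck_mono[OF _ CV], of 2 0]
    unfolding w_def by simp_all
  have bound: "\<exists>K\<ge>0. \<forall>x\<in>cball 0 B. K * min 0 (w x) \<le> laplacian (laplacian w) x" for B
  proof -
    have "continuous_on (cball 0 B) U"
      using Ck_imp_continuous_on[OF CU] continuous_on_subset by blast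
    then obtain K where K: "0 \<le> K"
        "\<And>x. x \<in> cball 0 B \<Longrightarrow> K * min 0 (U x - V x) \<le> V x powr (-q) - U x powr (-q)"
      using powr_neg_diff_lower_bound[OF compact_cball _ _ _ q] Upos Vpos by blast
    have "K * min 0 (w x) \<le> laplacian (laplacian w) x" if "x \<in> cball 0 B" for x
      using K(2)[OF that] ineq[rule_format, of x] unfolding w_def by linarith
    with K(1) show ?thesis by blast
  qed
  have nonneg: "V x \<le> U x" for x
    using radial_bilaplacian_nonneg[OF w init bound] unfolding w_def by simp
  have "0 \<le> laplacian (laplacian w) x" for x
  proof -
    have "U x powr (-q) \<le> V x powr (-q)" using nonneg Vpos q by (intro powr_mono2') auto
    then show ?thesis using ineq[rule_format, of x] unfolding w_def by linarith
  qed
  then show ?thesis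
    using nonneg radial_bilaplacian_pos[OF w init] unfolding w_def by auto
qed

end
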